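(* Let $A,A^*:V\to V$ be diagonalizable linear maps, each with exactly $d+1$ distinct eigenvalues, let $E_0,\dots,E_d$ be an ordering of the primitive idempotents of $A$ and $E^*_0,\dots,E^*_d$ an ordering of those of $A^*$, with $\theta_i$ (resp. $\theta^*_i$) the eigenvalue of $A$ (resp. $A^*$) for $E_i$ (resp. $E^*_i$), and assume $\dim E^*_0V=1$. Let $\{\zeta_i\}_{i=0}^d$ be the split sequence. Then $$\zeta_d=\eta^*_d(\theta^*_0)\,\tau_d(\theta_d)\,\mathrm{tr}(E_dE^*_0),\qquad \sum_{i=0}^d\eta_{d-i}(\theta_0)\eta^*_{d-i}(\theta^*_0)\zeta_i=\eta^*_d(\theta^*_0)\,\eta_d(\theta_0)\,\mathrm{tr}(E_0E^*_0).$$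
   Context: $V$ is a nonzero finite-dimensional vector space over an algebraically closed field $\mathcal K$. The primitive idempotent of a diagonalizable $X$ for eigenvalue $\lambda_i$ is $\prod_{j\ne i}\frac{X-\lambda_jI}{\lambda_i-\lambda_j}$. Polynomials: $\eta_i(x)=\prod_{j=0}^{i-1}(x-\theta_{d-j})$, $\eta^*_i(x)=\prod_{j=0}^{i-1}(x-\theta^*_{d-j})$, $\tau_i(x)=\prod_{j=0}^{i-1}(x-\theta_j)$ for $0\le i\le d$ (empty products equal $1$). Since $\dim E^*_0V=1$, the map $E^*_0\tau_i(A)$ acts on $E^*_0V$ as a scalar $\chi_i$; the split sequence is $\zeta_i=(\theta^*_0-\theta^*_1)\cdots(\theta^*_0-\theta^*_i)\chi_i$ for $0\le i\le d$. *)

theory Defs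
  imports "Jordan_Normal_Form.DL_Rank" "Jordan_Normal_Form.Char_Poly"
    "HOL-Computational_Algebra.Polynomial"
begin

fun mat_prod_list :: "nat \<Rightarrow> 'a::comm_ring_1 mat list \<Rightarrow> 'a mat" where
  "mat_prod_list n [] = 1\<^sub>m n"
| "mat_prod_list n (M # Ms) = M * mat_prod_list n Ms"

definition mtrace :: "'a::comm_ring_1 mat \<Rightarrow> 'a" where
  "mtrace M = (\<Sum>i<dim_row M. M $$ (i, i))"

definition diagonalizable :: "'a::comm_ring_1 mat \<Rightarrow> bool" where
  "diagonalizable M \<longleftrightarrow> (\<exists>D. similar_mat M D \<and> diagonal_mat D)"

definition prim_idem :: "nat \<Rightarrow> 'a::field mat \<Rightarrow> (nat \<Rightarrow> 'a) \<Rightarrow> nat \<Rightarrow> nat \<Rightarrow> 'a mat" where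
  "prim_idem n X th d i = mat_prod_list n
     (map (\<lambda>j. (1 / (th i - th j)) \<cdot>\<^sub>m (X - th j \<cdot>\<^sub>m 1\<^sub>m n)) (filter (\<lambda>j. j \<noteq> i) [0..<Suc d]))"

definition eta_poly :: "(nat \<Rightarrow> 'a::comm_ring_1) \<Rightarrow> nat \<Rightarrow> nat \<Rightarrow> 'a \<Rightarrow> 'a" where
  "eta_poly th d i x = (\<Prod>j<i. x - th (d - j))"

definition tau_poly :: "(nat \<Rightarrow> 'a::comm_ring_1) \<Rightarrow> nat \<Rightarrow> 'a \<Rightarrow> 'a" where
  "tau_poly th i x = (\<Prod>j<i. x - th j)"

definition tau_mat :: "nat \<Rightarrow> 'a::comm_ring_1 mat \<Rightarrow> (nat \<Rightarrow> 'a) \<Rightarrow> nat \<Rightarrow> 'a mat" where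
  "tau_mat n X th i = mat_prod_list n (map (\<lambda>j. X - th j \<cdot>\<^sub>m 1\<^sub>m n) [0..<i])"

definition split_chi :: "nat \<Rightarrow> 'a::field mat \<Rightarrow> 'a mat \<Rightarrow> (nat \<Rightarrow> 'a) \<Rightarrow> nat \<Rightarrow> 'a" where
  "split_chi n X Es0 th i = (THE c. \<forall>v \<in> carrier_vec n.
      (Es0 * tau_mat n X th i) *\<^sub>v (Es0 *\<^sub>v v) = c \<cdot>\<^sub>v (Es0 *\<^sub>v v))"

definition split_seq :: "nat \<Rightarrow> 'a::field mat \<Rightarrow> 'a mat \<Rightarrow> (nat \<Rightarrow> 'a) \<Rightarrow> (nat \<Rightarrow> 'a) \<Rightarrow> nat \<Rightarrow> nat \<Rightarrow> 'a" where
  "split_seq n X Xs th ths d i =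
     (\<Prod>j\<in>{1..i}. ths 0 - ths j) * split_chi n X (prim_idem n Xs ths d 0) th i"

end

theory Submission
  imports Defs "Jordan_Normal_Form.DL_Rank_Submatrix"
begin

text \<open>
  Since E*_0 has rank one, all 2x2 minors of E*_0 vanish, so E*_0 = u w^T and therefore
  E*_0 M E*_0 = tr(M E*_0) E*_0 for every M. Hence chi_i = tr(tau_i(A) E*_0), and each zeta_i
  is a multiple of tr(tau_i(A) E*_0). On the other side, the Lagrange formula for the primitive
  idempotents gives tau_d(theta_d) E_d = tau_d(A) and
  eta_d(theta_0) E_0 = (A - theta_1) ... (A - theta_d); writing A - theta_m as
  (A - theta_0) + (theta_0 - theta_m) and telescoping, the latter product equals
  sum_i eta_(d-i)(theta_0) tau_i(A). Both identities now follow from the linearity of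
  X \<mapsto> tr(X E*_0).
\<close>

lemma det_mat_2:
  fixes f :: "nat \<times> nat \<Rightarrow> 'a::comm_ring_1"
  shows "det (mat 2 2 f) = f (0,0) * f (1,1) - f (0,1) * f (1,0)"
proof -
  have "det (mat 2 2 f) = (\<Sum>i<2. mat 2 2 f $$ (i,0) * cofactor (mat 2 2 f) i 0)"
    by (rule laplace_expansion_column) auto
  also have "\<dots> = f (0,0) * cofactor (mat 2 2 f) 0 0 + f (1,0) * cofactor (mat 2 2 f) 1 0"
    by (simp add: numeral_2_eq_2)
  also have "cofactor (mat 2 2 f) 0 0 = f (1,1)"
    unfolding cofactor_def by (subst det_single) (auto simp: mat_delete_def)
  also have "cofactor (mat 2 2 f) 1 0 = - f (0,1)"
    unfolding cofactor_def by (subst det_single) (auto simp: mat_delete_def)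
  finally show ?thesis by (simp add: algebra_simps)
qed

lemma pick_doubleton:
  assumes "(i::nat) < j"
  shows "pick {i,j} 0 = i" and "pick {i,j} 1 = j"
proof -
  show i: "pick {i,j} 0 = i" using assms by (auto intro!: Least_equality)
  show "pick {i,j} 1 = j" using assms i by (auto simp: One_nat_def intro!: Least_equality)
qed

lemma rank_le_1_minor_ordered:
  fixes E :: "'a::field mat"
  assumes E: "E \<in> carrier_mat n m" and rank: "vec_space.rank n E \<le> 1"
    and ij: "i < j" "j < n" and kl: "k < l" "l < m"
  shows "E $$ (i,k) * E $$ (j,l) = E $$ (i,l) * E $$ (j,k)"
proof (rule ccontr)
  assume "\<not> ?thesis"
  have rows: "{x. x < dim_row E \<and> x \<in> {i,j}} = {i,j}" and cols: "{x. x < dim_col E \<and> x \<in> {k,l}} = {k,l}"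
    using E ij kl by auto
  have "submatrix E {i,j} {k,l} = mat 2 2 (\<lambda>(a,b). E $$ (pick {i,j} a, pick {k,l} b))"
    unfolding submatrix_def rows cols using ij(1) kl(1) by (simp add: numeral_2_eq_2)
  then have "det (submatrix E {i,j} {k,l}) = E $$ (i,k) * E $$ (j,l) - E $$ (i,l) * E $$ (j,k)"
    using pick_doubleton[OF ij(1)] pick_doubleton[OF kl(1)] by (simp add: det_mat_2 del: pick.simps)
  with \<open>\<not> ?thesis\<close> have "det (submatrix E {i,j} {k,l}) \<noteq> 0" by simp
  from vec_space.rank_gt_minor[OF E this] have "card {x. x < m \<and> x \<in> {k,l}} \<le> 1"
    using rank by simp
  moreover have "{x. x < m \<and> x \<in> {k,l}} = {k,l}" using kl by auto
  ultimately show False using kl(1) by simp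
qed

lemma rank_le_1_minor:
  fixes E :: "'a::field mat"
  assumes E: "E \<in> carrier_mat n m" and rank: "vec_space.rank n E \<le> 1"
    and "i < n" "j < n" "k < m" "l < m"
  shows "E $$ (i,k) * E $$ (j,l) = E $$ (i,l) * E $$ (j,k)"
  using rank_le_1_minor_ordered[OF E rank] assms(3-)
  by (cases i j rule: linorder_cases; cases k l rule: linorder_cases) (metis mult.commute)+

lemma rank_1_nonzero_entry:
  fixes E :: "'a::field mat"
  assumes E: "E \<in> carrier_mat n m" and rank: "vec_space.rank n E = 1"
  obtains p q where "p < n" "q < m" "E $$ (p,q) \<noteq> 0"
proof -
  have "vec_space.rank n (0\<^sub>m n m :: 'a mat) = 0" by (rule vec_space.rank_0I)
  with rank have nonzero: "E \<noteq> 0\<^sub>m n m" by auto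
  have "\<exists>p q. p < n \<and> q < m \<and> E $$ (p,q) \<noteq> 0"
  proof (rule ccontr)
    assume "\<not> ?thesis"
    then have "E = 0\<^sub>m n m" using E by (auto intro!: eq_matI)
    with nonzero show False ..
  qed
  then show ?thesis using that by blast
qed

lemma rank_1_entries_factor:
  fixes E :: "'a::field mat"
  assumes E: "E \<in> carrier_mat n m" and rank: "vec_space.rank n E = 1"
  obtains u w where "\<And>x y. x < n \<Longrightarrow> y < m \<Longrightarrow> E $$ (x,y) = u x * w y"
proof -
  obtain p q where pq: "p < n" "q < m" "E $$ (p,q) \<noteq> 0"
    by (rule rank_1_nonzero_entry[OF E rank])
  have "E $$ (x,y) = E $$ (x,q) * (E $$ (p,y) / E $$ (p,q))" if "x < n" "y < m" for x y
    using rank_le_1_minor[OF E _ that(1) pq(1) that(2) pq(2)] rank pq(3)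
    by (simp add: field_simps)
  then show ?thesis by (rule that)
qed

lemma rank_1_sandwich:
  fixes E M :: "'a::field mat"
  assumes E: "E \<in> carrier_mat n n" and rank: "vec_space.rank n E = 1" and M: "M \<in> carrier_mat n n"
  shows "E * M * E = mtrace (M * E) \<cdot>\<^sub>m E"
proof -
  obtain u w where uw: "\<And>x y. x < n \<Longrightarrow> y < n \<Longrightarrow> E $$ (x,y) = u x * w y"
    using rank_1_entries_factor[OF E rank] by blast
  define s where "s = (\<Sum>b<n. \<Sum>a<n. w b * M $$ (b,a) * u a)"
  have "mtrace (M * E) = s"
    unfolding mtrace_def s_def using M E
    by (auto simp: scalar_prod_def uw sum_distrib_left ac_simps atLeast0LessThan intro!: sum.cong)
  moreover have "(E * M * E) $$ (i,j) = u i * s * w j" if "i < n" "j < n" for i j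
  proof -
    have "(E * M * E) $$ (i,j) = (\<Sum>b<n. \<Sum>a<n. u i * w b * M $$ (b,a) * (u a * w j))"
      using that E M
      by (simp add: scalar_prod_def uw sum_distrib_left sum_distrib_right atLeast0LessThan ac_simps)
    also have "\<dots> = u i * s * w j"
      unfolding s_def by (simp add: sum_distrib_left sum_distrib_right ac_simps)
    finally show ?thesis .
  qed
  ultimately show ?thesis using E M by (auto simp: uw)
qed

lemma smult_mat_mult_vec:
  "v \<in> carrier_vec (dim_col A) \<Longrightarrow> (k \<cdot>\<^sub>m A) *\<^sub>v v = (k::'a::comm_ring_1) \<cdot>\<^sub>v (A *\<^sub>v v)"
  by (rule eq_vecI) (auto simp: scalar_prod_def sum_distrib_left ac_simps)

lemma rank_1_action_scalar:
  fixes E M :: "'a::field mat"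
  assumes E: "E \<in> carrier_mat n n" and rank: "vec_space.rank n E = 1" and M: "M \<in> carrier_mat n n"
  shows "(THE c. \<forall>v \<in> carrier_vec n. (E * M) *\<^sub>v (E *\<^sub>v v) = c \<cdot>\<^sub>v (E *\<^sub>v v)) = mtrace (M * E)"
proof (rule the_equality)
  have action: "(E * M) *\<^sub>v (E *\<^sub>v v) = mtrace (M * E) \<cdot>\<^sub>v (E *\<^sub>v v)" if "v \<in> carrier_vec n" for v
  proof -
    have "(E * M) *\<^sub>v (E *\<^sub>v v) = (E * M * E) *\<^sub>v v"
      using E M that by (simp add: assoc_mult_mat_vec[of _ n n _ n])
    also have "\<dots> = mtrace (M * E) \<cdot>\<^sub>v (E *\<^sub>v v)"
      using E that by (simp add: rank_1_sandwich[OF E rank M] smult_mat_mult_vec)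
    finally show ?thesis .
  qed
  then show "\<forall>v \<in> carrier_vec n. (E * M) *\<^sub>v (E *\<^sub>v v) = mtrace (M * E) \<cdot>\<^sub>v (E *\<^sub>v v)" ..
  fix c assume c: "\<forall>v \<in> carrier_vec n. (E * M) *\<^sub>v (E *\<^sub>v v) = c \<cdot>\<^sub>v (E *\<^sub>v v)"
  obtain p q where pq: "p < n" "q < n" "E $$ (p,q) \<noteq> 0"
    by (rule rank_1_nonzero_entry[OF E rank])
  have "c \<cdot>\<^sub>v (E *\<^sub>v unit_vec n q) = mtrace (M * E) \<cdot>\<^sub>v (E *\<^sub>v unit_vec n q)"
    using c action[of "unit_vec n q"] by simp
  then have "(c \<cdot>\<^sub>v (E *\<^sub>v unit_vec n q)) $ p = (mtrace (M * E) \<cdot>\<^sub>v (E *\<^sub>v unit_vec n q)) $ p"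
    by (rule arg_cong)
  then have "c * E $$ (p,q) = mtrace (M * E) * E $$ (p,q)"
    using E pq by simp
  then show "c = mtrace (M * E)" using pq(3) by simp
qed

lemma smult_smult_mat: "a \<cdot>\<^sub>m (b \<cdot>\<^sub>m A) = (a * b :: 'a::semigroup_mult) \<cdot>\<^sub>m A"
  by (rule eq_matI) (auto simp: mult.assoc)

lemma mat_prod_list_carrier:
  "set Ms \<subseteq> carrier_mat n n \<Longrightarrow> mat_prod_list n Ms \<in> carrier_mat n n"
  by (induction Ms) auto

lemma mat_prod_list_snoc:
  assumes "set Ms \<subseteq> carrier_mat n n" and "M \<in> carrier_mat n n"
  shows "mat_prod_list n (Ms @ [M]) = mat_prod_list n Ms * M"
  using assms
proof (induction Ms)
  case (Cons N Ms)
  then have "N * (mat_prod_list n Ms * M) = N * mat_prod_list n Ms * M"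
    using mat_prod_list_carrier[of Ms n] by (simp add: assoc_mult_mat[of _ n n _ n _ n])
  with Cons show ?case by simp
qed simp

lemma mat_prod_list_smult:
  assumes "\<And>j. j \<in> set xs \<Longrightarrow> M j \<in> carrier_mat n n"
  shows "mat_prod_list n (map (\<lambda>j. c j \<cdot>\<^sub>m M j) xs) = prod_list (map c xs) \<cdot>\<^sub>m mat_prod_list n (map M xs)"
  using assms
proof (induction xs)
  case Nil
  show ?case by (auto intro!: eq_matI)
next
  case (Cons x xs)
  have Mx: "M x \<in> carrier_mat n n" and P: "mat_prod_list n (map M xs) \<in> carrier_mat n n"
    using Cons.prems by (auto intro!: mat_prod_list_carrier)
  have "(c x \<cdot>\<^sub>m M x) * (prod_list (map c xs) \<cdot>\<^sub>m mat_prod_list n (map M xs))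
        = c x \<cdot>\<^sub>m (prod_list (map c xs) \<cdot>\<^sub>m (M x * mat_prod_list n (map M xs)))"
    using Mx P by (simp add: mult_smult_assoc_mat[OF Mx smult_carrier_mat[OF P]] mult_smult_distrib[OF Mx P])
  also have "\<dots> = (c x * prod_list (map c xs)) \<cdot>\<^sub>m (M x * mat_prod_list n (map M xs))"
    by (rule smult_smult_mat)
  finally show ?case using Cons by simp
qed

lemma tau_mat_carrier: "A \<in> carrier_mat n n \<Longrightarrow> tau_mat n A th k \<in> carrier_mat n n"
  unfolding tau_mat_def by (rule mat_prod_list_carrier) auto

lemma tau_mat_Suc:
  assumes "A \<in> carrier_mat n n"
  shows "tau_mat n A th (Suc k) = tau_mat n A th k * (A - th k \<cdot>\<^sub>m 1\<^sub>m n)"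
proof -
  have "set (map (\<lambda>j. A - th j \<cdot>\<^sub>m 1\<^sub>m n) [0..<k]) \<subseteq> carrier_mat n n"
    using assms by (auto simp: minus_carrier_mat)
  from mat_prod_list_snoc[OF this] show ?thesis
    using assms by (simp add: tau_mat_def minus_carrier_mat)
qed

lemma tau_mat_Suc_shift:
  "tau_mat n A th (Suc k) = (A - th 0 \<cdot>\<^sub>m 1\<^sub>m n) * tau_mat n A (\<lambda>j. th (Suc j)) k"
  unfolding tau_mat_def by (simp add: upt_conv_Cons map_Suc_upt[symmetric] o_def del: upt_Suc)

lemma linear_factor_mult:
  fixes A B :: "'a::comm_ring_1 mat"
  shows "A \<in> carrier_mat n n \<Longrightarrow> B \<in> carrier_mat n n \<Longrightarrow> (A - c \<cdot>\<^sub>m 1\<^sub>m n) * B = A * B - c \<cdot>\<^sub>m B"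
  by (subst minus_mult_distrib_mat[of _ n n]) (auto simp: mult_smult_assoc_mat[of _ n n])

lemma mult_linear_factor:
  fixes A B :: "'a::comm_ring_1 mat"
  shows "A \<in> carrier_mat n n \<Longrightarrow> B \<in> carrier_mat n n \<Longrightarrow> B * (A - c \<cdot>\<^sub>m 1\<^sub>m n) = B * A - c \<cdot>\<^sub>m B"
  by (subst mult_minus_distrib_mat[of _ n n]) (auto simp: mult_smult_distrib[of _ n n])

lemma linear_factor_commute:
  fixes A B :: "'a::comm_ring_1 mat"
  assumes "A \<in> carrier_mat n n" "B \<in> carrier_mat n n" and "A * B = B * A"
  shows "(A - c \<cdot>\<^sub>m 1\<^sub>m n) * B = B * (A - c \<cdot>\<^sub>m 1\<^sub>m n)"
  using assms by (simp add: linear_factor_mult mult_linear_factor)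

lemma tau_mat_commute:
  assumes A: "A \<in> carrier_mat n n"
  shows "A * tau_mat n A th k = tau_mat n A th k * A"
proof (induction k)
  case 0
  show ?case using A by (simp add: tau_mat_def)
next
  case (Suc k)
  let ?T = "tau_mat n A th k" and ?L = "A - th k \<cdot>\<^sub>m 1\<^sub>m n"
  have T: "?T \<in> carrier_mat n n" and L: "?L \<in> carrier_mat n n"
    using A by (auto intro: tau_mat_carrier)
  have "A * tau_mat n A th (Suc k) = A * ?T * ?L"
    by (simp add: tau_mat_Suc[OF A] assoc_mult_mat[OF A T L])
  also have "\<dots> = ?T * (A * ?L)"
    by (simp add: Suc.IH assoc_mult_mat[OF T A L])
  also have "A * ?L = ?L * A"
    by (rule linear_factor_commute[OF A A refl, symmetric])
  also have "?T * (?L * A) = tau_mat n A th (Suc k) * A"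
    by (simp add: tau_mat_Suc[OF A] assoc_mult_mat[OF T L A])
  finally show ?case .
qed

lemma mtrace_smult: "X \<in> carrier_mat n n \<Longrightarrow> mtrace (c \<cdot>\<^sub>m X) = c * mtrace X"
  unfolding mtrace_def sum_distrib_left by (rule sum.cong) auto

lemma mtrace_minus:
  "X \<in> carrier_mat n n \<Longrightarrow> Y \<in> carrier_mat n n \<Longrightarrow> mtrace (X - Y) = mtrace X - mtrace Y"
  unfolding mtrace_def by (simp add: sum_subtractf)

lemma mtrace_smult_mult:
  "X \<in> carrier_mat n n \<Longrightarrow> E \<in> carrier_mat n n \<Longrightarrow> mtrace ((c \<cdot>\<^sub>m X) * E) = c * mtrace (X * E)"
  by (simp add: mult_smult_assoc_mat[of _ n n] mtrace_smult[of _ n])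

lemma mtrace_linear_factor_mult:
  assumes A: "A \<in> carrier_mat n n" and P: "P \<in> carrier_mat n n" and E: "E \<in> carrier_mat n n"
  shows "mtrace ((A - c \<cdot>\<^sub>m 1\<^sub>m n) * P * E) = mtrace (A * P * E) - c * mtrace (P * E)"
proof -
  have "(A - c \<cdot>\<^sub>m 1\<^sub>m n) * P * E = A * P * E - (c \<cdot>\<^sub>m P) * E"
    unfolding linear_factor_mult[OF A P] using A P E by (simp add: minus_mult_distrib_mat[of _ n n])
  moreover have "A * P * E \<in> carrier_mat n n" "(c \<cdot>\<^sub>m P) * E \<in> carrier_mat n n"
    using A P E by auto
  ultimately show ?thesis using P E by (simp add: mtrace_minus mtrace_smult_mult)
qed

lemma mtrace_tau_mat_expansion:
  assumes A: "A \<in> carrier_mat n n" and E: "E \<in> carrier_mat n n"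
  shows "(\<Sum>i\<le>k. (\<Prod>m\<in>{Suc i..k}. th 0 - th m) * mtrace (tau_mat n A th i * E))
       = mtrace (tau_mat n A (\<lambda>j. th (Suc j)) k * E)"
proof (induction k)
  case 0
  show ?case by (simp add: tau_mat_def)
next
  case (Suc k)
  let ?P = "tau_mat n A (\<lambda>j. th (Suc j)) k"
  have P: "?P \<in> carrier_mat n n" by (rule tau_mat_carrier[OF A])
  have split: "(\<Prod>m\<in>{Suc i..Suc k}. th 0 - th m) = (th 0 - th (Suc k)) * (\<Prod>m\<in>{Suc i..k}. th 0 - th m)"
    if "i \<le> k" for i
    using that by (simp add: prod.nat_ivl_Suc')
  have "(\<Sum>i\<le>Suc k. (\<Prod>m\<in>{Suc i..Suc k}. th 0 - th m) * mtrace (tau_mat n A th i * E))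
      = (th 0 - th (Suc k)) * (\<Sum>i\<le>k. (\<Prod>m\<in>{Suc i..k}. th 0 - th m) * mtrace (tau_mat n A th i * E))
        + mtrace (tau_mat n A th (Suc k) * E)"
    by (simp add: split sum_distrib_left mult.assoc mult.left_commute)
  also have "\<dots> = (th 0 - th (Suc k)) * mtrace (?P * E) + mtrace ((A - th 0 \<cdot>\<^sub>m 1\<^sub>m n) * ?P * E)"
    by (simp only: Suc.IH tau_mat_Suc_shift)
  also have "\<dots> = mtrace ((A - th (Suc k) \<cdot>\<^sub>m 1\<^sub>m n) * ?P * E)"
    by (simp only: mtrace_linear_factor_mult[OF A P E]) (simp add: algebra_simps)
  also have "(A - th (Suc k) \<cdot>\<^sub>m 1\<^sub>m n) * ?P = tau_mat n A (\<lambda>j. th (Suc j)) (Suc k)"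
    using linear_factor_commute[OF A P tau_mat_commute[OF A]] by (simp add: tau_mat_Suc[OF A])
  finally show ?case .
qed

lemma eta_poly_atLeastAtMost:
  assumes "k \<le> d"
  shows "eta_poly th d k x = (\<Prod>m\<in>{Suc (d - k)..d}. x - th m)"
  unfolding eta_poly_def
  by (rule prod.reindex_bij_witness[where i = "\<lambda>m. d - m" and j = "\<lambda>j. d - j"]) (use assms in auto)

lemma mtrace_tau_mat_eta_expansion:
  assumes "A \<in> carrier_mat n n" and "E \<in> carrier_mat n n"
  shows "(\<Sum>i\<le>d. eta_poly th d (d - i) (th 0) * mtrace (tau_mat n A th i * E))
       = mtrace (tau_mat n A (\<lambda>j. th (Suc j)) d * E)"
  by (simp add: eta_poly_atLeastAtMost mtrace_tau_mat_expansion[OF assms, symmetric])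

lemma prim_idem_carrier: "X \<in> carrier_mat n n \<Longrightarrow> prim_idem n X th d i \<in> carrier_mat n n"
  unfolding prim_idem_def by (rule mat_prod_list_carrier) (auto simp: minus_carrier_mat)

lemma prim_idem_eq_smult_prod:
  assumes "X \<in> carrier_mat n n"
  shows "prim_idem n X th d i =
    prod_list (map (\<lambda>j. 1 / (th i - th j)) (filter (\<lambda>j. j \<noteq> i) [0..<Suc d]))
      \<cdot>\<^sub>m mat_prod_list n (map (\<lambda>j. X - th j \<cdot>\<^sub>m 1\<^sub>m n) (filter (\<lambda>j. j \<noteq> i) [0..<Suc d]))"
  unfolding prim_idem_def by (rule mat_prod_list_smult) (use assms in \<open>auto simp: minus_carrier_mat\<close>)

lemma prod_mult_prod_reciprocal:
  fixes f :: "'b \<Rightarrow> 'a::field"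
  assumes "\<And>j. j \<in> S \<Longrightarrow> f j \<noteq> 0"
  shows "prod f S * (\<Prod>j\<in>S. 1 / f j) = 1"
  using assms by (simp add: prod.distrib[symmetric])

lemma tau_poly_smult_prim_idem_last:
  assumes X: "X \<in> carrier_mat n n" and inj: "inj_on th {..d}"
  shows "tau_poly th d (th d) \<cdot>\<^sub>m prim_idem n X th d d = tau_mat n X th d"
proof -
  have "filter (\<lambda>j. j \<noteq> d) [0..<Suc d] = [0..<d]"
    by (simp add: filter_id_conv)
  then have "prim_idem n X th d d = (\<Prod>j<d. 1 / (th d - th j)) \<cdot>\<^sub>m tau_mat n X th d"
    unfolding prim_idem_eq_smult_prod[OF X] tau_mat_def
    by (simp add: prod.distinct_set_conv_list[symmetric] atLeast0LessThan)
  moreover have "tau_poly th d (th d) * (\<Prod>j<d. 1 / (th d - th j)) = 1"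
    unfolding tau_poly_def using inj by (intro prod_mult_prod_reciprocal) (auto simp: inj_on_eq_iff)
  ultimately show ?thesis by (auto simp: smult_smult_mat)
qed

lemma eta_poly_mult_prod_initial:
  assumes "i \<le> d"
  shows "eta_poly th d (d - i) x * (\<Prod>j\<in>{1..i}. x - th j) = eta_poly th d d x"
proof -
  have "{1..d} = {Suc i..d} \<union> {1..i}" using assms by auto
  then show ?thesis using assms by (simp add: eta_poly_atLeastAtMost prod.union_disjoint)
qed

lemma eta_poly_smult_prim_idem_first:
  assumes X: "X \<in> carrier_mat n n" and inj: "inj_on th {..d}"
  shows "eta_poly th d d (th 0) \<cdot>\<^sub>m prim_idem n X th d 0 = tau_mat n X (\<lambda>j. th (Suc j)) d"
proof -
  have "filter (\<lambda>j. j \<noteq> 0) [0..<Suc d] = map Suc [0..<d]"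
    by (induction d) auto
  moreover have "(\<Prod>j\<in>{1..d}. 1 / (th 0 - th j)) = (\<Prod>j<d. 1 / (th 0 - th (Suc j)))"
    unfolding image_Suc_lessThan[symmetric] by (simp add: prod.reindex)
  ultimately have "prim_idem n X th d 0 = (\<Prod>j\<in>{1..d}. 1 / (th 0 - th j)) \<cdot>\<^sub>m tau_mat n X (\<lambda>j. th (Suc j)) d"
    unfolding prim_idem_eq_smult_prod[OF X] tau_mat_def
    by (simp add: prod.distinct_set_conv_list[symmetric] o_def atLeast0LessThan)
  moreover have "eta_poly th d d (th 0) * (\<Prod>j\<in>{1..d}. 1 / (th 0 - th j)) = 1"
    using inj by (simp add: eta_poly_atLeastAtMost, intro prod_mult_prod_reciprocal) (auto simp: inj_on_eq_iff)
  ultimately show ?thesis by (auto simp: smult_smult_mat)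
qed

theorem lemma3p8:
  fixes A As :: "'a::alg_closed_field mat" and n d :: nat and th ths :: "nat \<Rightarrow> 'a"
  assumes "A \<in> carrier_mat n n" and "As \<in> carrier_mat n n"
    and "diagonalizable A" and "diagonalizable As"
    and "inj_on th {..d}" and "{x. eigenvalue A x} = th ` {..d}"
    and "inj_on ths {..d}" and "{x. eigenvalue As x} = ths ` {..d}"
    and "vec_space.rank n (prim_idem n As ths d 0) = 1"
  shows "(split_seq n A As th ths d d =
           eta_poly ths d d (ths 0) * tau_poly th d (th d)
             * mtrace (prim_idem n A th d d * prim_idem n As ths d 0)) \<and>
         ((\<Sum>i\<le>d. eta_poly th d (d - i) (th 0) * eta_poly ths d (d - i) (ths 0)
                  * split_seq n A As th ths d i) =
           eta_poly ths d d (ths 0) * eta_poly th d d (th 0)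
             * mtrace (prim_idem n A th d 0 * prim_idem n As ths d 0))"
proof -
  note A = assms(1) and inj = assms(5)
  define Es where "Es = prim_idem n As ths d 0"
  have Es: "Es \<in> carrier_mat n n" and rank: "vec_space.rank n Es = 1"
    using assms(2,9) by (simp_all add: Es_def prim_idem_carrier)
  have zeta: "eta_poly ths d (d - i) (ths 0) * split_seq n A As th ths d i
      = eta_poly ths d d (ths 0) * mtrace (tau_mat n A th i * Es)" if "i \<le> d" for i
    unfolding split_seq_def split_chi_def Es_def[symmetric]
      rank_1_action_scalar[OF Es rank tau_mat_carrier[OF A]]
      mult.assoc[symmetric] eta_poly_mult_prod_initial[OF that] ..
  have "split_seq n A As th ths d d = eta_poly ths d d (ths 0) * mtrace (tau_mat n A th d * Es)"
    using zeta[of d] by (simp add: eta_poly_def)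
  also have "tau_mat n A th d = tau_poly th d (th d) \<cdot>\<^sub>m prim_idem n A th d d"
    by (rule tau_poly_smult_prim_idem_last[OF A inj, symmetric])
  finally have part1: "split_seq n A As th ths d d =
      eta_poly ths d d (ths 0) * tau_poly th d (th d) * mtrace (prim_idem n A th d d * Es)"
    by (simp add: mtrace_smult_mult[OF prim_idem_carrier[OF A] Es] mult.assoc)
  have "(\<Sum>i\<le>d. eta_poly th d (d - i) (th 0) * eta_poly ths d (d - i) (ths 0) * split_seq n A As th ths d i)
      = eta_poly ths d d (ths 0) * (\<Sum>i\<le>d. eta_poly th d (d - i) (th 0) * mtrace (tau_mat n A th i * Es))"
    by (simp add: sum_distrib_left zeta mult.assoc mult.left_commute)
  also have "\<dots> = eta_poly ths d d (ths 0) * mtrace (tau_mat n A (\<lambda>j. th (Suc j)) d * Es)"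
    by (simp only: mtrace_tau_mat_eta_expansion[OF A Es])
  also have "tau_mat n A (\<lambda>j. th (Suc j)) d = eta_poly th d d (th 0) \<cdot>\<^sub>m prim_idem n A th d 0"
    by (rule eta_poly_smult_prim_idem_first[OF A inj, symmetric])
  finally have part2: "(\<Sum>i\<le>d. eta_poly th d (d - i) (th 0) * eta_poly ths d (d - i) (ths 0)
        * split_seq n A As th ths d i)
      = eta_poly ths d d (ths 0) * eta_poly th d d (th 0) * mtrace (prim_idem n A th d 0 * Es)"
    by (simp add: mtrace_smult_mult[OF prim_idem_carrier[OF A] Es] mult.assoc)
  show ?thesis using part1 part2 by (simp add: Es_def)
qed

end
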